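(* Let $S:=T_1T_2\cdots T_{N-1}$. Let $i,k$ be integers with $k\ge0$, $i\le N-1$ and $i-k>1$. Then $$(T_{i-k}T_{i-k+1}\cdots T_i)(S\,T_{N-1}T_{N-2}\cdots T_i)=(S\,T_{N-1}T_{N-2}\cdots T_{i+1})(T_{i-k-1}T_{i-k}\cdots T_i)$$ in $\mathcal H_N(s)$ (where $T_{N-1}\cdots T_{i+1}$ is the empty product when $i=N-1$).
   Context: $N\ge2$, $s$ an indeterminate. $\mathcal H_N(s)$ is the algebra generated by $T_1,\dots,T_{N-1}$ with relations $(T_i+1)(T_i-s)=0$, $T_iT_{i+1}T_i=T_{i+1}T_iT_{i+1}$, $T_iT_j=T_jT_i$ for $|i-j|>1$. *)

theory Defs
  imports Main
begin

text \<open>Hecke algebra relations for generators T 1, ..., T (N-1) with parameter s,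
  inside an arbitrary ring 'a in which s is central (i.e. a Z[s]-algebra).
  An identity holds in H_N(s) iff it holds for all such families (universal property).\<close>

definition hecke_rels :: "nat \<Rightarrow> 'a::ring_1 \<Rightarrow> (nat \<Rightarrow> 'a) \<Rightarrow> bool" where
  "hecke_rels N s T \<longleftrightarrow>
     (\<forall>i. 1 \<le> i \<and> i \<le> N - 1 \<longrightarrow> s * T i = T i * s) \<and>
     (\<forall>i. 1 \<le> i \<and> i \<le> N - 1 \<longrightarrow> (T i + 1) * (T i - s) = 0) \<and>
     (\<forall>i. 1 \<le> i \<and> i + 1 \<le> N - 1 \<longrightarrow> T i * T (i+1) * T i = T (i+1) * T i * T (i+1)) \<and>
     (\<forall>i j. 1 \<le> i \<and> i \<le> N - 1 \<and> 1 \<le> j \<and> j \<le> N - 1 \<and> (i + 1 < j \<or> j + 1 < i)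
              \<longrightarrow> T i * T j = T j * T i)"

definition asc_prod :: "(nat \<Rightarrow> 'a::monoid_mult) \<Rightarrow> nat \<Rightarrow> nat \<Rightarrow> 'a" where
  "asc_prod T a b = prod_list (map T [a..<Suc b])"

definition desc_prod :: "(nat \<Rightarrow> 'a::monoid_mult) \<Rightarrow> nat \<Rightarrow> nat \<Rightarrow> 'a" where
  "desc_prod T b a = prod_list (map T (rev [a..<Suc b]))"

end

theory Submission
  imports Defs
begin

text \<open>With \<open>S = T 1 \<cdots> T (N - 1)\<close>,
  the braid relation gives \<open>T l * S = S * T (l - 1)\<close> for \<open>2 \<le> l \<le> N - 1\<close>, so the ascending
  product \<open>T (i - k) \<cdots> T i\<close> passes through \<open>S\<close> as \<open>T (i - k - 1) \<cdots> T (i - 1)\<close>. The latter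
  commutes with \<open>T (N - 1) \<cdots> T (i + 1)\<close>, and the factor \<open>T i\<close> split off the descending
  product completes \<open>T (i - k - 1) \<cdots> T i\<close>.\<close>

definition braid_rels :: "nat \<Rightarrow> (nat \<Rightarrow> 'a::monoid_mult) \<Rightarrow> bool" where
  "braid_rels N T \<longleftrightarrow>
     (\<forall>i. 1 \<le> i \<and> i + 1 \<le> N - 1 \<longrightarrow> T i * T (i+1) * T i = T (i+1) * T i * T (i+1)) \<and>
     (\<forall>i j. 1 \<le> i \<and> i \<le> N - 1 \<and> 1 \<le> j \<and> j \<le> N - 1 \<and> (i + 1 < j \<or> j + 1 < i)
              \<longrightarrow> T i * T j = T j * T i)"

lemma hecke_rels_imp_braid_rels: "hecke_rels N s T \<Longrightarrow> braid_rels N T"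
  unfolding hecke_rels_def braid_rels_def by blast

lemma braid_rels_braid:
  "braid_rels N T \<Longrightarrow> 1 \<le> i \<Longrightarrow> i + 1 \<le> N - 1 \<Longrightarrow> T i * T (i+1) * T i = T (i+1) * T i * T (i+1)"
  unfolding braid_rels_def by blast

lemma braid_rels_far_commute:
  "braid_rels N T \<Longrightarrow> 1 \<le> i \<Longrightarrow> i \<le> N - 1 \<Longrightarrow> 1 \<le> j \<Longrightarrow> j \<le> N - 1 \<Longrightarrow> i + 1 < j \<or> j + 1 < i
    \<Longrightarrow> T i * T j = T j * T i"
  unfolding braid_rels_def by blast

lemma far_commute_prod_list:
  assumes H: "braid_rels N T" and j: "1 \<le> j" "j \<le> N - 1"
    and xs: "\<forall>l\<in>set xs. 1 \<le> l \<and> l \<le> N - 1 \<and> (l + 1 < j \<or> j + 1 < l)"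
  shows "T j * prod_list (map T xs) = prod_list (map T xs) * T j"
  using xs
proof (induction xs)
  case Nil
  then show ?case by simp
next
  case (Cons l xs)
  have "T j * T l = T l * T j"
    using braid_rels_far_commute[OF H j] Cons.prems by auto
  then have "T j * T l * prod_list (map T xs) = T l * (prod_list (map T xs) * T j)"
    using Cons by (simp add: mult.assoc)
  then show ?case by (simp add: mult.assoc)
qed

lemma prod_list_far_commute:
  assumes H: "braid_rels N T"
    and xs: "\<forall>j\<in>set xs. 1 \<le> j \<and> j \<le> N - 1"
    and ys: "\<forall>l\<in>set ys. 1 \<le> l \<and> l \<le> N - 1"
    and far: "\<forall>j\<in>set xs. \<forall>l\<in>set ys. l + 1 < j \<or> j + 1 < l"
  shows "prod_list (map T xs) * prod_list (map T ys) = prod_list (map T ys) * prod_list (map T xs)"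
  using xs far
proof (induction xs)
  case Nil
  then show ?case by simp
next
  case (Cons j xs)
  have "T j * prod_list (map T ys) = prod_list (map T ys) * T j"
    using far_commute_prod_list[OF H, of j ys] Cons.prems ys by auto
  then have "T j * (prod_list (map T xs) * prod_list (map T ys))
      = prod_list (map T ys) * (T j * prod_list (map T xs))"
    using Cons by (simp flip: mult.assoc)
  then show ?case by (simp add: mult.assoc)
qed

text \<open>Induction on \<open>j - m\<close>: for \<open>m < j\<close> the generator \<open>T (j + 1)\<close> commutes past \<open>T m\<close>; at
  \<open>m = j\<close> the braid relation turns \<open>T (j + 1) * T j * T (j + 1)\<close> into \<open>T j * T (j + 1) * T j\<close>,
  and the trailing \<open>T j\<close> commutes with \<open>T (j + 2) \<cdots> T (N - 1)\<close>.\<close>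
lemma generator_shift_prod_upt:
  assumes H: "braid_rels N T" and m: "1 \<le> m" "m \<le> j" and j: "j + 1 \<le> N - 1"
  shows "T (j+1) * prod_list (map T [m..<N]) = prod_list (map T [m..<N]) * T j"
  using m
proof (induction "j - m" arbitrary: m)
  case 0
  then have m_eq: "m = j" by simp
  have upt: "[m..<N] = j # (j+1) # [j+2..<N]"
    using m_eq j by (simp add: upt_conv_Cons)
  have braid: "T j * T (j+1) * T j = T (j+1) * T j * T (j+1)"
    using braid_rels_braid[OF H, of j] 0 m_eq j by simp
  have tail: "T j * prod_list (map T [j+2..<N]) = prod_list (map T [j+2..<N]) * T j"
    by (rule far_commute_prod_list[OF H]) (use j 0 m_eq in auto)
  have "T (j+1) * prod_list (map T [m..<N])
      = (T (j+1) * T j * T (j+1)) * prod_list (map T [j+2..<N])"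
    by (simp add: upt mult.assoc)
  also have "\<dots> = T j * T (j+1) * (T j * prod_list (map T [j+2..<N]))"
    unfolding braid[symmetric] by (simp only: mult.assoc)
  also have "\<dots> = prod_list (map T [m..<N]) * T j"
    by (simp only: tail upt list.map prod_list.Cons mult.assoc)
  finally show ?case .
next
  case (Suc d)
  have upt: "[m..<N] = m # [m+1..<N]"
    using Suc.prems j by (simp add: upt_conv_Cons)
  have IH: "T (j+1) * prod_list (map T [m+1..<N]) = prod_list (map T [m+1..<N]) * T j"
    using Suc by auto
  have "T (j+1) * T m = T m * T (j+1)"
    using braid_rels_far_commute[OF H] Suc j by auto
  then have "T (j+1) * prod_list (map T [m..<N]) = T m * (T (j+1) * prod_list (map T [m+1..<N]))"
    by (simp only: upt list.map prod_list.Cons flip: mult.assoc)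
  also have "\<dots> = prod_list (map T [m..<N]) * T j"
    by (simp only: IH upt list.map prod_list.Cons mult.assoc)
  finally show ?case .
qed

lemma prod_list_shift_prod_upt:
  assumes H: "braid_rels N T" and xs: "\<forall>l\<in>set xs. 2 \<le> l \<and> l \<le> N - 1"
  shows "prod_list (map T xs) * prod_list (map T [1..<N])
       = prod_list (map T [1..<N]) * prod_list (map (\<lambda>l. T (l - 1)) xs)"
  using xs
proof (induction xs)
  case Nil
  then show ?case by simp
next
  case (Cons l xs)
  have "T l * prod_list (map T [1..<N]) = prod_list (map T [1..<N]) * T (l - 1)"
    using generator_shift_prod_upt[OF H, of 1 "l - 1"] Cons.prems by auto
  then have "T l * (prod_list (map T xs) * prod_list (map T [1..<N]))
      = prod_list (map T [1..<N]) * (T (l - 1) * prod_list (map (\<lambda>l. T (l - 1)) xs))"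
    using Cons by (simp add: mult.assoc flip: mult.assoc[of "T l"])
  then show ?case by (simp add: mult.assoc)
qed

theorem lemma2p3:
  fixes N i k :: nat and s :: "'a::ring_1" and T :: "nat \<Rightarrow> 'a"
  assumes "N \<ge> 2" and "hecke_rels N s T"
    and "i \<le> N - 1" and "k + 1 < i"
  shows "asc_prod T (i - k) i * (asc_prod T 1 (N - 1) * desc_prod T (N - 1) i)
       = (asc_prod T 1 (N - 1) * desc_prod T (N - 1) (i + 1)) * asc_prod T (i - k - 1) i"
proof -
  have H: "braid_rels N T" using assms(2) by (rule hecke_rels_imp_braid_rels)
  let ?P = "\<lambda>xs. prod_list (map T xs)"
  let ?S = "asc_prod T 1 (N - 1)" and ?D = "desc_prod T (N - 1) (i + 1)"
  have S: "?S = ?P [1..<N]" and D: "?D = ?P (rev [i+1..<N])"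
    and A: "asc_prod T (i - k) i = ?P [i-k..<Suc i]"
    using assms(1) by (simp_all add: asc_prod_def desc_prod_def)
  have shifted: "map (\<lambda>l. T (l - 1)) [i-k..<Suc i] = map T [i-k-1..<i]"
  proof -
    have "[i-k..<Suc i] = map Suc [i-k-1..<i]"
      using assms(4) by (simp add: map_Suc_upt Suc_diff_Suc)
    then show ?thesis by (simp add: comp_def)
  qed
  have "?P [i-k..<Suc i] * ?P [1..<N] = ?P [1..<N] * prod_list (map (\<lambda>l. T (l - 1)) [i-k..<Suc i])"
    by (rule prod_list_shift_prod_upt[OF H]) (use assms in auto)
  then have through_S: "asc_prod T (i - k) i * ?S = ?S * ?P [i-k-1..<i]"
    by (simp only: S A shifted)
  have split_desc: "desc_prod T (N - 1) i = ?D * T i"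
    using assms by (simp add: desc_prod_def upt_conv_Cons)
  have split_asc: "asc_prod T (i - k - 1) i = ?P [i-k-1..<i] * T i"
    by (simp add: asc_prod_def)
  have far: "?P [i-k-1..<i] * ?D = ?D * ?P [i-k-1..<i]"
    unfolding D by (rule prod_list_far_commute[OF H]) (use assms in auto)
  show ?thesis
    by (simp only: split_desc split_asc mult.assoc[symmetric] through_S)
       (simp only: mult.assoc far)
qed

end
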